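(* Let $f:[a,b]\to\mathbb{Q}_Q(\mathbb{R}^n)$ be continuous, let $x_0\in(a,b)$, and suppose $f$ is strongly affinely approximatable at $x_0$. Then there exist continuous functions $f_1,\dots,f_Q:[a,b]\to\mathbb{R}^n$ such that $f(x)=\sum_{i=1}^Q[[f_i(x)]]$ for all $x\in[a,b]$ and each $f_i$ is differentiable at $x_0$.
   Context: $\mathbb{Q}_Q(\mathbb{R}^n)$ denotes the set of unordered $Q$-tuples $\sum_{i=1}^Q[[a_i]]$ of points of $\mathbb{R}^n$ (two such sums are equal iff the tuples agree up to a permutation), with metric $\mathcal{G}\big(\sum_i[[a_i]],\sum_i[[b_i]]\big)=\min_{\sigma}\big(\sum_{i}|a_i-b_{\sigma(i)}|^2\big)^{1/2}$ over permutations $\sigma$. A function $f:[a,b]\to\mathbb{Q}_Q(\mathbb{R}^n)$ is affinely approximatable at $x_0$ if there are affine maps $A_1,\dots,A_Q:\mathbb{R}\to\mathbb{R}^n$ with $\lim_{x\to x_0}\mathcal{G}\big(f(x),\sum_{i=1}^Q[[A_i(x)]]\big)/|x-x_0|=0$; it is strongly affinely approximatable at $x_0$ if moreover these maps can be chosen so that $A_i=A_j$ whenever $A_i(x_0)=A_j(x_0)$. *)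

theory Defs
  imports "HOL-Analysis.Analysis" "HOL-Library.Multiset"
begin

text \<open>Unordered Q-tuples of points of a normed space are multisets of size Q.
  The metric G: minimum over orderings (equivalently permutations) of the l2 distance.\<close>

definition Gdist :: "'a::real_normed_vector multiset \<Rightarrow> 'a multiset \<Rightarrow> real" where
  "Gdist A B = Inf {sqrt (\<Sum>i<length as. (norm (as ! i - bs ! i))\<^sup>2) | as bs.
                     mset as = A \<and> mset bs = B}"

definition qpt :: "nat \<Rightarrow> (nat \<Rightarrow> 'b \<Rightarrow> 'a) \<Rightarrow> 'b \<Rightarrow> 'a multiset" where
  "qpt Q g x = mset (map (\<lambda>i. g i x) [0..<Q])"

definition qcontinuous_on :: "real set \<Rightarrow> (real \<Rightarrow> 'a::real_normed_vector multiset) \<Rightarrow> bool" where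
  "qcontinuous_on S f \<longleftrightarrow>
     (\<forall>x\<in>S. \<forall>e>0. \<exists>d>0. \<forall>y\<in>S. \<bar>y - x\<bar> < d \<longrightarrow> Gdist (f y) (f x) < e)"

definition affinely_approximatable ::
  "nat \<Rightarrow> real set \<Rightarrow> (real \<Rightarrow> 'a::real_normed_vector multiset) \<Rightarrow> real \<Rightarrow> bool" where
  "affinely_approximatable Q S f x0 \<longleftrightarrow>
     (\<exists>c v :: nat \<Rightarrow> 'a.
        ((\<lambda>x. Gdist (f x) (qpt Q (\<lambda>i x. c i + x *\<^sub>R v i) x) / \<bar>x - x0\<bar>) \<longlongrightarrow> 0)
          (at x0 within S))"

definition strongly_affinely_approximatable ::
  "nat \<Rightarrow> real set \<Rightarrow> (real \<Rightarrow> 'a::real_normed_vector multiset) \<Rightarrow> real \<Rightarrow> bool" where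
  "strongly_affinely_approximatable Q S f x0 \<longleftrightarrow>
     (\<exists>c v :: nat \<Rightarrow> 'a.
        ((\<lambda>x. Gdist (f x) (qpt Q (\<lambda>i x. c i + x *\<^sub>R v i) x) / \<bar>x - x0\<bar>) \<longlongrightarrow> 0)
          (at x0 within S) \<and>
        (\<forall>i<Q. \<forall>j<Q. c i + x0 *\<^sub>R v i = c j + x0 *\<^sub>R v j \<longrightarrow> c i = c j \<and> v i = v j))"

end

(* Continuous selections exist by induction on Q. If f(y) contains two distinct points p and q,
   then for z near y the points of f(z) close to p form a cluster of constant size, separated from
   the remaining points by a gap; so near y the function splits into two continuous functions of
   smaller multiplicity, which have continuous selections. Selections on two intervals sharing a
   point glue after permuting the branches to agree there; by connectedness this yields
   selections on compact intervals, and by exhaustion on each component of the open set of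
   non-collapsed points. At a collapsed point f(y) = Q[[p]] every choice of branches is
   continuous, because each point of f(z) lies within G(f(z), f(y)) of p.

   For differentiability, every branch f_i(x) lies within G(f(x), sum_j [[A_j(x)]]) = o(|x - x0|)
   of some affine A_j(x). By continuity only maps with A_j(x0) = f_i(x0) occur near x0, strong
   approximability makes all of these equal, so f_i is differentiable at x0. *)

theory Submission
  imports Defs "HOL-Combinatorics.Multiset_Permutations"
begin

section \<open>Optimal matchings and the metric G\<close>

definition matching_cost :: "('a::real_normed_vector \<times> 'a) list \<Rightarrow> real" where
  "matching_cost zs = sqrt (\<Sum>z\<leftarrow>zs. (norm (fst z - snd z))\<^sup>2)"

lemma matching_cost_zip:
  assumes "length as = length bs"
  shows "matching_cost (zip as bs) = sqrt (\<Sum>i<length as. (norm (as ! i - bs ! i))\<^sup>2)"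
  unfolding matching_cost_def
  by (subst sum_list_sum_nth) (simp add: assms atLeast0LessThan)

lemma norm_le_matching_cost:
  assumes "z \<in> set zs"
  shows "norm (fst z - snd z) \<le> matching_cost zs"
proof -
  have "(norm (fst z - snd z))\<^sup>2 \<le> (\<Sum>z\<leftarrow>zs. (norm (fst z - snd z))\<^sup>2)"
    using assms by (intro member_le_sum_list) auto
  then show ?thesis
    unfolding matching_cost_def by (simp add: real_le_rsqrt)
qed

lemma matching_cost_filter: "matching_cost (filter P zs) \<le> matching_cost zs"
proof -
  have "(\<Sum>z\<leftarrow>filter P zs. (norm (fst z - snd z))\<^sup>2) \<le> (\<Sum>z\<leftarrow>zs. (norm (fst z - snd z))\<^sup>2)"
    by (induction zs) (auto intro: add_increasing)
  then show ?thesis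
    unfolding matching_cost_def by simp
qed

lemma Gdist_le_matching_cost:
  assumes "mset (map fst zs) = A" "mset (map snd zs) = B"
  shows "Gdist A B \<le> matching_cost zs"
  unfolding Gdist_def
proof (rule cInf_lower)
  show "matching_cost zs \<in> {sqrt (\<Sum>i<length as. (norm (as ! i - bs ! i))\<^sup>2) | as bs.
                                  mset as = A \<and> mset bs = B}"
  proof (intro CollectI exI conjI)
    show "matching_cost zs =
      sqrt (\<Sum>i<length (map fst zs). (norm (map fst zs ! i - map snd zs ! i))\<^sup>2)"
      using matching_cost_zip[of "map fst zs" "map snd zs"] by (simp add: zip_map_fst_snd)
  qed (use assms in auto)
qed (auto intro!: bdd_belowI[of _ 0] sum_nonneg)

lemma Gdist_optimal_matching:
  assumes "size A = size B"
  obtains zs where "mset (map fst zs) = A" "mset (map snd zs) = B" "Gdist A B = matching_cost zs"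
proof -
  let ?cost = "\<lambda>(as, bs). sqrt (\<Sum>i<length as. (norm (as ! i - bs ! i))\<^sup>2)"
  let ?S = "{sqrt (\<Sum>i<length as. (norm (as ! i - bs ! i))\<^sup>2) | as bs. mset as = A \<and> mset bs = B}"
  have "?S = ?cost ` (permutations_of_multiset A \<times> permutations_of_multiset B)"
    by (auto simp: permutations_of_multiset_def)
  then have "finite ?S"
    by simp
  moreover have "?S \<noteq> {}"
    using ex_mset[of A] ex_mset[of B] by blast
  ultimately have "Gdist A B = Min ?S"
    unfolding Gdist_def by (rule cInf_eq_Min)
  then have "Gdist A B \<in> ?S"
    using Min_in[OF \<open>finite ?S\<close> \<open>?S \<noteq> {}\<close>] by simp
  then obtain as bs where as: "mset as = A" and bs: "mset bs = B"
    and cost: "Gdist A B = sqrt (\<Sum>i<length as. (norm (as ! i - bs ! i))\<^sup>2)"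
    by blast
  have "length as = length bs"
    using as bs assms by (metis size_mset)
  then show ?thesis
    using that[of "zip as bs"] as bs cost matching_cost_zip[of as bs] by simp
qed

lemma Gdist_close_point:
  assumes "size A = size B" "w \<in># A"
  obtains u where "u \<in># B" "norm (w - u) \<le> Gdist A B"
proof -
  obtain zs where zs: "mset (map fst zs) = A" "mset (map snd zs) = B" "Gdist A B = matching_cost zs"
    using Gdist_optimal_matching[OF assms(1)] .
  then obtain z where z: "z \<in> set zs" "w = fst z"
    using assms(2) by auto
  show ?thesis
  proof (rule that)
    show "snd z \<in># B"
      using z(1) zs(2) by force
    show "norm (w - snd z) \<le> Gdist A B"
      using norm_le_matching_cost[OF z(1)] z(2) zs(3) by simp
  qed
qed

lemma Gdist_close_point':
  assumes "size A = size B" "u \<in># B"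
  obtains w where "w \<in># A" "norm (w - u) \<le> Gdist A B"
proof -
  obtain zs where zs: "mset (map fst zs) = A" "mset (map snd zs) = B" "Gdist A B = matching_cost zs"
    using Gdist_optimal_matching[OF assms(1)] .
  then obtain z where z: "z \<in> set zs" "u = snd z"
    using assms(2) by auto
  show ?thesis
  proof (rule that)
    show "fst z \<in># A"
      using z(1) zs(1) by force
    show "norm (fst z - u) \<le> Gdist A B"
      using norm_le_matching_cost[OF z(1)] z(2) zs(3) by simp
  qed
qed

lemma Gdist_filter_mset:
  assumes "size A = size B"
    and "\<And>w u. w \<in># A \<Longrightarrow> u \<in># B \<Longrightarrow> norm (w - u) \<le> Gdist A B \<Longrightarrow> P w \<longleftrightarrow> P' u"
  shows "size (filter_mset P A) = size (filter_mset P' B)"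
    and "Gdist (filter_mset P A) (filter_mset P' B) \<le> Gdist A B"
proof -
  obtain zs where zs: "mset (map fst zs) = A" "mset (map snd zs) = B" "Gdist A B = matching_cost zs"
    using Gdist_optimal_matching[OF assms(1)] .
  let ?ys = "filter (P \<circ> fst) zs"
  have "P (fst z) \<longleftrightarrow> P' (snd z)" if z: "z \<in> set zs" for z
  proof (rule assms(2))
    show "fst z \<in># A" "snd z \<in># B"
      using z zs(1,2) by force+
    show "norm (fst z - snd z) \<le> Gdist A B"
      using norm_le_matching_cost[OF z] zs(3) by simp
  qed
  then have same_filter: "?ys = filter (P' \<circ> snd) zs"
    by (intro filter_cong) auto
  have fst_ys: "mset (map fst ?ys) = filter_mset P A"
    unfolding zs(1)[symmetric] filter_map[symmetric] by simp
  have snd_ys: "mset (map snd ?ys) = filter_mset P' B"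
    unfolding same_filter zs(2)[symmetric] filter_map[symmetric] by simp
  from fst_ys snd_ys show "size (filter_mset P A) = size (filter_mset P' B)"
    by (metis length_map size_mset)
  have "Gdist (filter_mset P A) (filter_mset P' B) \<le> matching_cost ?ys"
    by (rule Gdist_le_matching_cost[OF fst_ys snd_ys])
  also have "\<dots> \<le> Gdist A B"
    using zs(3) matching_cost_filter by simp
  finally show "Gdist (filter_mset P A) (filter_mset P' B) \<le> Gdist A B" .
qed

lemma count_less_size:
  assumes "q \<in># M" "q \<noteq> p"
  shows "count M p < size M"
proof -
  have "q \<notin># filter_mset (\<lambda>u. u = p) M"
    using assms(2) by simp
  then have "filter_mset (\<lambda>u. u = p) M \<subset># M"
    using assms(1) by (metis multiset_filter_subset subset_mset.less_le)
  then show ?thesis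
    using mset_subset_size by (fastforce simp: filter_eq_replicate_mset)
qed

lemma constant_mset_eq_replicate_mset:
  assumes "\<forall>p\<in>#M. \<forall>q\<in>#M. p = q"
  shows "M = replicate_mset (size M) (SOME p. p \<in># M)"
proof -
  have "w = (SOME p. p \<in># M)" if "w \<in># M" for w
    using assms that someI[of "\<lambda>p. p \<in># M" w] by blast
  then have "set_mset M \<subseteq> {SOME p. p \<in># M}"
    by blast
  then show ?thesis
    by (rule set_mset_subset_singletonD)
qed

lemma isolating_radius:
  fixes p :: "'a::real_normed_vector"
  obtains \<epsilon> where "\<epsilon> > 0" "\<And>u. u \<in># M \<Longrightarrow> u \<noteq> p \<Longrightarrow> 4 * \<epsilon> \<le> norm (u - p)"
proof -
  obtain \<delta> where "\<delta> > 0" and \<delta>: "\<forall>u\<in>set_mset M. u \<noteq> p \<longrightarrow> \<delta> \<le> dist p u"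
    using finite_set_avoid[of "set_mset M" p] by blast
  have "4 * (\<delta> / 4) \<le> norm (u - p)" if "u \<in># M" "u \<noteq> p" for u
  proof -
    have "\<delta> \<le> dist p u"
      using \<delta> that by blast
    then have "\<delta> \<le> dist u p"
      by (metis dist_commute)
    then show ?thesis
      by (simp add: dist_norm)
  qed
  then show ?thesis
    using that[of "\<delta> / 4"] \<open>\<delta> > 0\<close> by simp
qed

(* Each point of A lies within distance \<epsilon> of a point of B, so it is either within \<epsilon> of p or
   farther than 3 * \<epsilon> from it; the ball of radius 2 * \<epsilon> thus captures exactly the points
   matched to copies of p. *)
lemma Gdist_cluster:
  fixes A B :: "'a::real_normed_vector multiset"
  assumes "size A = size B" "Gdist A B < \<epsilon>"
    and separated: "\<And>u. u \<in># B \<Longrightarrow> u \<noteq> p \<Longrightarrow> 4 * \<epsilon> \<le> norm (u - p)"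
  shows "size {#w \<in># A. norm (w - p) < 2 * \<epsilon>#} = count B p"
    and "\<And>w. w \<in># A \<Longrightarrow> norm (w - p) < \<epsilon> \<or> 3 * \<epsilon> < norm (w - p)"
proof -
  have triangle: "norm (u - p) \<le> norm (w - u) + norm (w - p)" for u w
    using norm_triangle_ineq[of "u - w" "w - p"] by (simp add: norm_minus_commute)
  have gap: "norm (w - p) < \<epsilon> \<or> 3 * \<epsilon> < norm (w - p)"
    and matched: "norm (w - p) < 2 * \<epsilon> \<longleftrightarrow> u = p"
    if "u \<in># B" "norm (w - u) < \<epsilon>" for w u
  proof -
    have "norm (w - p) < \<epsilon>" if "u = p"
      using \<open>norm (w - u) < \<epsilon>\<close> that by simp
    moreover have "3 * \<epsilon> < norm (w - p)" if "u \<noteq> p"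
      using separated[OF \<open>u \<in># B\<close> that] triangle[of u w] \<open>norm (w - u) < \<epsilon>\<close> by linarith
    moreover have "0 \<le> norm (w - u)"
      by simp
    ultimately show "norm (w - p) < \<epsilon> \<or> 3 * \<epsilon> < norm (w - p)" "norm (w - p) < 2 * \<epsilon> \<longleftrightarrow> u = p"
      using \<open>norm (w - u) < \<epsilon>\<close> by (cases "u = p"; linarith)+
  qed
  have "size {#w \<in># A. norm (w - p) < 2 * \<epsilon>#} = size {#u \<in># B. u = p#}"
    using assms(2) matched by (intro Gdist_filter_mset(1)[OF assms(1)]) auto
  then show "size {#w \<in># A. norm (w - p) < 2 * \<epsilon>#} = count B p"
    by (simp add: filter_eq_replicate_mset)
  fix w assume "w \<in># A"
  then obtain u where "u \<in># B" "norm (w - u) \<le> Gdist A B"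
    using Gdist_close_point[OF assms(1)] by blast
  then show "norm (w - p) < \<epsilon> \<or> 3 * \<epsilon> < norm (w - p)"
    using gap assms(2) by force
qed

section \<open>Q-points and Q-continuity\<close>

lemma size_qpt [simp]: "size (qpt Q g x) = Q"
  by (simp add: qpt_def)

lemma qpt_in: "i < Q \<Longrightarrow> g i x \<in># qpt Q g x"
  by (simp add: qpt_def)

lemma set_mset_qpt: "set_mset (qpt Q g x) = (\<lambda>i. g i x) ` {..<Q}"
  by (auto simp: qpt_def)

lemma qpt_cong: "(\<And>i. i < Q \<Longrightarrow> g i x = h i y) \<Longrightarrow> qpt Q g x = qpt Q h y"
  unfolding qpt_def by (intro arg_cong[where f=mset] map_cong) auto

lemma qpt_const: "qpt Q (\<lambda>i _. p) x = replicate_mset Q p"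
  by (simp add: qpt_def map_replicate_const)

lemma qpt_append:
  "qpt (k + m) (\<lambda>i. if i < k then g i else h (i - k)) x = qpt k g x + qpt m h x"
proof (induction m)
  case 0
  have "qpt k (\<lambda>i. if i < k then g i else h (i - k)) x = qpt k g x"
    by (rule qpt_cong) simp
  then show ?case
    by (simp add: qpt_def)
next
  case (Suc m)
  then show ?case
    by (simp add: qpt_def)
qed

lemma qpt_permute:
  assumes "p permutes {..<Q}"
  shows "qpt Q (\<lambda>i. g (p i)) x = qpt Q g x"
proof -
  have "map (\<lambda>i. g (p i) x) [0..<Q] = permute_list p (map (\<lambda>i. g i x) [0..<Q])"
    using assms permutes_in_image[OF assms]
    by (intro nth_equalityI) (auto simp: permute_list_nth)
  then show ?thesis
    unfolding qpt_def using assms by (simp add: mset_permute_list)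
qed

lemma qpt_eq_obtain_permutation:
  assumes "qpt Q g t = qpt Q h t"
  obtains p where "p permutes {..<Q}" "\<And>i. i < Q \<Longrightarrow> h (p i) t = g i t"
proof -
  have "mset (map (\<lambda>i. g i t) [0..<Q]) = mset (map (\<lambda>i. h i t) [0..<Q])"
    using assms by (simp add: qpt_def)
  then obtain p where p: "p permutes {..<Q}"
    and perm: "permute_list p (map (\<lambda>i. h i t) [0..<Q]) = map (\<lambda>i. g i t) [0..<Q]"
    by (rule mset_eq_permutation) simp
  show ?thesis
  proof (rule that[OF p])
    fix i assume "i < Q"
    then show "h (p i) t = g i t"
      using arg_cong[OF perm, of "\<lambda>xs. xs ! i"] p permutes_in_image[OF p]
      by (simp add: permute_list_nth)
  qed
qed

lemma qpt_close_branch: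
  assumes "size M = Q" "w \<in># M"
  shows "\<exists>j<Q. norm (w - g j x) \<le> Gdist M (qpt Q g x)"
proof -
  obtain u where "u \<in># qpt Q g x" "norm (w - u) \<le> Gdist M (qpt Q g x)"
    using Gdist_close_point[of M "qpt Q g x" w] assms by auto
  then show ?thesis
    by (auto simp: set_mset_qpt)
qed

lemma qcontinuous_on_subset: "qcontinuous_on S f \<Longrightarrow> T \<subseteq> S \<Longrightarrow> qcontinuous_on T f"
  unfolding qcontinuous_on_def by (meson subsetD)

lemma qcontinuous_on_filter_mset:
  fixes f :: "real \<Rightarrow> 'a::real_normed_vector multiset"
  assumes "\<forall>z\<in>S. size (f z) = Q" "qcontinuous_on S f" "\<epsilon> > 0"
    and stable: "\<And>z z' w w'. z \<in> S \<Longrightarrow> z' \<in> S \<Longrightarrow> w \<in># f z \<Longrightarrow> w' \<in># f z' \<Longrightarrow>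
      norm (w - w') < \<epsilon> \<Longrightarrow> P w \<longleftrightarrow> P w'"
  shows "qcontinuous_on S (\<lambda>z. filter_mset P (f z))"
  unfolding qcontinuous_on_def
proof (intro ballI allI impI)
  fix x e assume x: "x \<in> S" and "(e::real) > 0"
  then obtain \<delta> where "\<delta> > 0" and \<delta>: "\<forall>y\<in>S. \<bar>y - x\<bar> < \<delta> \<longrightarrow> Gdist (f y) (f x) < min e \<epsilon>"
    using assms(2,3) unfolding qcontinuous_on_def by (metis min_less_iff_conj)
  have "Gdist (filter_mset P (f y)) (filter_mset P (f x)) < e" if y: "y \<in> S" "\<bar>y - x\<bar> < \<delta>" for y
  proof -
    have close: "Gdist (f y) (f x) < min e \<epsilon>"
      using \<delta> y by blast
    have "Gdist (filter_mset P (f y)) (filter_mset P (f x)) \<le> Gdist (f y) (f x)"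
      using close by (intro Gdist_filter_mset(2)) (use assms(1) x y stable in auto)
    then show ?thesis
      using close by linarith
  qed
  then show "\<exists>\<delta>>0. \<forall>y\<in>S. \<bar>y - x\<bar> < \<delta> \<longrightarrow> Gdist (filter_mset P (f y)) (filter_mset P (f x)) < e"
    using \<open>\<delta> > 0\<close> by blast
qed

section \<open>Gluing continuous selections\<close>

definition qselection ::
  "nat \<Rightarrow> (real \<Rightarrow> 'a::topological_space multiset) \<Rightarrow> real set \<Rightarrow> (nat \<Rightarrow> real \<Rightarrow> 'a) \<Rightarrow> bool"
where
  "qselection Q f S F \<longleftrightarrow> (\<forall>i<Q. continuous_on S (F i)) \<and> (\<forall>y\<in>S. f y = qpt Q F y)"

lemma qselection_subset: "qselection Q f S F \<Longrightarrow> T \<subseteq> S \<Longrightarrow> qselection Q f T F"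
  unfolding qselection_def by (meson continuous_on_subset subsetD)

lemma qselection_permute:
  assumes "qselection Q f S F" "p permutes {..<Q}"
  shows "qselection Q f S (\<lambda>i. F (p i))"
  using assms permutes_in_image[OF assms(2)] qpt_permute[OF assms(2), of F]
  unfolding qselection_def by simp

lemma qselection_match:
  assumes "qselection Q f S F" "t \<in> S" "f t = qpt Q G t"
  obtains F' where "qselection Q f S F'" "\<And>i. i < Q \<Longrightarrow> F' i t = G i t"
proof -
  have "qpt Q G t = qpt Q F t"
    using assms unfolding qselection_def by simp
  then obtain p where p: "p permutes {..<Q}" "\<And>i. i < Q \<Longrightarrow> F (p i) t = G i t"
    by (rule qpt_eq_obtain_permutation) blast
  show ?thesis
    by (rule that[OF qselection_permute[OF assms(1) p(1)] p(2)])
qed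

lemma qselection_glue:
  assumes "c \<le> t" "t \<le> d" and F: "qselection Q f {c..t} F" and G: "qselection Q f {t..d} G"
    and agree: "\<And>i. i < Q \<Longrightarrow> F i t = G i t"
  shows "qselection Q f {c..d} (\<lambda>i y. if y \<le> t then F i y else G i y)"
  unfolding qselection_def
proof (intro conjI allI impI ballI)
  fix i assume i: "i < Q"
  have "continuous_on ({c..t} \<union> {t..d}) (\<lambda>y. if y \<le> t then F i y else G i y)"
  proof (rule continuous_on_closed_Un)
    show "continuous_on {c..t} (\<lambda>y. if y \<le> t then F i y else G i y)"
      using F i unfolding qselection_def by (auto intro: continuous_on_eq)
    show "continuous_on {t..d} (\<lambda>y. if y \<le> t then F i y else G i y)"
      by (rule continuous_on_eq[of _ "G i"]) (use G i agree[OF i] in \<open>auto simp: qselection_def\<close>)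
  qed auto
  moreover have "{c..t} \<union> {t..d} = {c..d}"
    using assms(1,2) by auto
  ultimately show "continuous_on {c..d} (\<lambda>y. if y \<le> t then F i y else G i y)"
    by simp
next
  fix y assume y: "y \<in> {c..d}"
  show "f y = qpt Q (\<lambda>i y. if y \<le> t then F i y else G i y) y"
  proof (cases "y \<le> t")
    case True
    then have "f y = qpt Q F y"
      using F y unfolding qselection_def by simp
    also have "\<dots> = qpt Q (\<lambda>i y. if y \<le> t then F i y else G i y) y"
      using True by (intro qpt_cong) simp
    finally show ?thesis .
  next
    case False
    then have "f y = qpt Q G y"
      using G y unfolding qselection_def by simp
    also have "\<dots> = qpt Q (\<lambda>i y. if y \<le> t then F i y else G i y) y"
      using False by (intro qpt_cong) simp
    finally show ?thesis .
  qed
qed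

lemma qselection_glue_at:
  assumes "c \<le> t" "t \<le> d" "qselection Q f {c..t} F" "qselection Q f {t..d} G"
  shows "\<exists>H. qselection Q f {c..d} H \<and> (\<forall>i<Q. \<forall>y\<in>{c..t}. H i y = F i y)"
proof -
  have "t \<in> {t..d}" "f t = qpt Q F t"
    using assms unfolding qselection_def by simp_all
  then obtain G' where G': "qselection Q f {t..d} G'" "\<And>i. i < Q \<Longrightarrow> G' i t = F i t"
    by (rule qselection_match[OF assms(4)]) blast
  show ?thesis
  proof (intro exI conjI)
    show "qselection Q f {c..d} (\<lambda>i y. if y \<le> t then F i y else G' i y)"
      by (rule qselection_glue[OF assms(1,2,3) G'(1)]) (simp add: G'(2))
  qed simp
qed

lemma qselection_extend:
  assumes "c' \<le> c" "c \<le> d" "d \<le> d'" and F: "qselection Q f {c..d} F" and G: "qselection Q f {c'..d'} G"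
  shows "\<exists>H. qselection Q f {c'..d'} H \<and> (\<forall>i<Q. \<forall>y\<in>{c..d}. H i y = F i y)"
proof -
  obtain H1 where H1: "qselection Q f {c..d'} H1" "\<forall>i<Q. \<forall>y\<in>{c..d}. H1 i y = F i y"
    using qselection_glue_at[OF assms(2,3) F qselection_subset[OF G, of "{d..d'}"]] assms by auto
  have G_left: "qselection Q f {c'..c} G"
    by (rule qselection_subset[OF G]) (use assms in auto)
  have "c \<in> {c'..c}" "f c = qpt Q H1 c"
    using H1(1) assms unfolding qselection_def by simp_all
  then obtain G' where G': "qselection Q f {c'..c} G'" "\<And>i. i < Q \<Longrightarrow> G' i c = H1 i c"
    by (rule qselection_match[OF G_left]) blast
  show ?thesis
  proof (intro exI conjI allI impI ballI)
    show "qselection Q f {c'..d'} (\<lambda>i y. if y \<le> c then G' i y else H1 i y)"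
      using qselection_glue[OF assms(1) _ G'(1) H1(1) G'(2)] assms by simp
    fix i y assume i: "i < Q" and y: "y \<in> {c..d}"
    show "(if y \<le> c then G' i y else H1 i y) = F i y"
    proof (cases "y = c")
      case True
      then show ?thesis
        using G'(2)[OF i] H1(2) i y by simp
    next
      case False
      then show ?thesis
        using H1(2) i y by simp
    qed
  qed
qed

lemma qselection_Un:
  assumes "y \<in> {a..b}" "y \<in> {c..d}" and F: "qselection Q f {a..b} F" and G: "qselection Q f {c..d} G"
  shows "\<exists>H. qselection Q f {min a c..max b d} H"
proof -
  obtain L where L: "qselection Q f {min a c..y} L"
  proof (cases "a \<le> c")
    case True
    then show ?thesis
      using that[OF qselection_subset[OF F]] assms(1) by simp
  next
    case False
    then show ?thesis
      using that[OF qselection_subset[OF G]] assms(2) by simp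
  qed
  obtain R where R: "qselection Q f {y..max b d} R"
  proof (cases "d \<le> b")
    case True
    then show ?thesis
      using that[OF qselection_subset[OF F]] assms(1) by simp
  next
    case False
    then show ?thesis
      using that[OF qselection_subset[OF G]] assms(2) by simp
  qed
  have "min a c \<le> y" "y \<le> max b d"
    using assms(1,2) by auto
  then show ?thesis
    using qselection_glue_at[OF _ _ L R] by blast
qed

lemma qselection_add:
  assumes "qselection k A S FA" "qselection m B S FB"
  shows "qselection (k + m) (\<lambda>z. A z + B z) S (\<lambda>i. if i < k then FA i else FB (i - k))"
  unfolding qselection_def
proof (intro conjI allI impI ballI)
  fix i assume "i < k + m"
  then show "continuous_on S (if i < k then FA i else FB (i - k))"
    using assms unfolding qselection_def by (cases "i < k") simp_all
next
  fix z assume "z \<in> S"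
  then show "A z + B z = qpt (k + m) (\<lambda>i. if i < k then FA i else FB (i - k)) z"
    using assms unfolding qselection_def by (simp add: qpt_append)
qed

lemma qselection_open_Union:
  assumes "\<And>k. k \<in> I \<Longrightarrow> open (V k)" "\<And>k. k \<in> I \<Longrightarrow> qselection Q f (V k) (G k)"
    and agree: "\<And>k m i y. k \<in> I \<Longrightarrow> m \<in> I \<Longrightarrow> i < Q \<Longrightarrow> y \<in> V k \<Longrightarrow> y \<in> V m \<Longrightarrow> G k i y = G m i y"
  shows "qselection Q f (\<Union>k\<in>I. V k) (\<lambda>i y. G (SOME k. k \<in> I \<and> y \<in> V k) i y)"
    (is "qselection Q f _ ?F")
proof -
  have F_eq: "?F i y = G k i y" if "k \<in> I" "i < Q" "y \<in> V k" for k i y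
  proof -
    have "(SOME k. k \<in> I \<and> y \<in> V k) \<in> I \<and> y \<in> V (SOME k. k \<in> I \<and> y \<in> V k)"
      using someI[of "\<lambda>k. k \<in> I \<and> y \<in> V k"] that by blast
    then show ?thesis
      using agree that by blast
  qed
  show ?thesis
    unfolding qselection_def
  proof (intro conjI allI impI ballI)
    fix i assume "i < Q"
    have "continuous_on (V k) (?F i)" if "k \<in> I" for k
      using assms(2)[OF that] F_eq[OF that \<open>i < Q\<close>] \<open>i < Q\<close>
      unfolding qselection_def by (auto intro: continuous_on_eq)
    then show "continuous_on (\<Union>k\<in>I. V k) (?F i)"
      using assms(1) by (intro continuous_on_open_UN)
  next
    fix y assume "y \<in> (\<Union>k\<in>I. V k)"
    then obtain k where "k \<in> I" "y \<in> V k"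
      by blast
    then have "f y = qpt Q (G k) y"
      using assms(2) unfolding qselection_def by blast
    also have "\<dots> = qpt Q ?F y"
      by (rule qpt_cong) (simp add: F_eq[OF \<open>k \<in> I\<close> _ \<open>y \<in> V k\<close>])
    finally show "f y = qpt Q ?F y" .
  qed
qed

lemma qselection_interval_from_local:
  assumes local: "\<And>x. x \<in> {c..d} \<Longrightarrow> \<exists>e>0. \<exists>F. qselection Q f {x-e..x+e} F"
  shows "\<exists>F. qselection Q f {c..d} F"
proof (cases "c \<le> d")
  case False
  then show ?thesis
    by (simp add: qselection_def)
next
  case True
  define R where "R x z \<longleftrightarrow> (\<exists>F. qselection Q f {min x z..max x z} F)" for x z
  have "R c d"
  proof (rule connected_equivalence_relation[of "{c..d}"])
    show "connected {c..d}" "c \<in> {c..d}" "d \<in> {c..d}"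
      using True by auto
    show "R y x" if "R x y" for x y
      using that unfolding R_def by (simp add: min.commute max.commute)
    show "R x z" if xy: "R x y" and yz: "R y z" for x y z
    proof -
      obtain F G where "qselection Q f {min x y..max x y} F" "qselection Q f {min y z..max y z} G"
        using xy yz unfolding R_def by blast
      then obtain H where H: "qselection Q f {min (min x y) (min y z)..max (max x y) (max y z)} H"
        using qselection_Un[of y "min x y" "max x y" "min y z" "max y z"] by fastforce
      have "{min x z..max x z} \<subseteq> {min (min x y) (min y z)..max (max x y) (max y z)}"
        by auto
      then show ?thesis
        unfolding R_def using qselection_subset[OF H] by blast
    qed
    show "\<exists>T. openin (top_of_set {c..d}) T \<and> x \<in> T \<and> (\<forall>z\<in>T. R x z)" if x: "x \<in> {c..d}" for x
    proof -
      obtain e F where "e > 0" and F: "qselection Q f {x-e..x+e} F"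
        using local[OF x] by blast
      have "R x z" if "z \<in> ball x e" for z
      proof -
        have "{min x z..max x z} \<subseteq> {x-e..x+e}"
          using that by (auto simp: dist_real_def)
        then show ?thesis
          unfolding R_def using qselection_subset[OF F] by blast
      qed
      then show ?thesis
        using \<open>e > 0\<close> x by (intro exI[of _ "{c..d} \<inter> ball x e"]) (auto simp: openin_open_Int)
    qed
  qed
  then show ?thesis
    using True unfolding R_def by simp
qed

lemma Inf_less_interior_less_Sup:
  fixes K :: "real set"
  assumes "y \<in> interior K" "bdd_below K" "bdd_above K"
  shows "Inf K < y \<and> y < Sup K"
proof -
  obtain e where "e > 0" "ball y e \<subseteq> K"
    using assms(1) unfolding mem_interior by blast
  moreover have "y - e/2 \<in> ball y e" "y + e/2 \<in> ball y e"
    using \<open>e > 0\<close> by (auto simp: dist_real_def)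
  ultimately have "Inf K \<le> y - e/2" "y + e/2 \<le> Sup K"
    using cInf_lower[OF _ assms(2)] cSup_upper[OF _ assms(3)] by blast+
  then show ?thesis
    using \<open>e > 0\<close> by linarith
qed

lemma open_interval_exhaustion:
  fixes J :: "real set"
  assumes "open J" "is_interval J" "x0 \<in> J"
  obtains c d :: "nat \<Rightarrow> real"
  where "decseq c" "incseq d" "\<And>k. c k \<le> d k" "\<And>k. {c k..d k} \<subseteq> J"
    "J \<subseteq> (\<Union>k. {c k<..<d k})"
proof -
  obtain C where C: "\<And>n. compact (C n)" "\<And>n. C n \<subseteq> J" "\<And>n. C n \<subseteq> interior (C (Suc n))"
    "\<Union>(range C) = J"
    using open_Union_compact_subsets[OF assms(1)] by metis
  define K where "K n = insert x0 (C n)" for n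
  have K: "compact (K n)" "K n \<noteq> {}" "K n \<subseteq> J" "K n \<subseteq> K (Suc n)" for n
    using C(1-3)[of n] interior_subset[of "C (Suc n)"] assms(3) by (auto simp: K_def)
  have bdd: "bdd_below (K n)" "bdd_above (K n)" for n
    using compact_imp_bounded[OF K(1)] by (simp_all add: bounded_imp_bdd_below bounded_imp_bdd_above)
  have K_in: "Inf (K n) \<in> K n" "Sup (K n) \<in> K n" for n
    using compact_imp_closed[OF K(1)] K(2) bdd by (simp_all add: closed_contains_Inf closed_contains_Sup)
  show ?thesis
  proof (rule that[of "\<lambda>n. Inf (K n)" "\<lambda>n. Sup (K n)"])
    show "decseq (\<lambda>n. Inf (K n))"
      using K(2,4) bdd by (intro decseq_SucI cInf_superset_mono)
    show "incseq (\<lambda>n. Sup (K n))"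
      using K(2,4) bdd by (intro incseq_SucI cSup_subset_mono)
    show "Inf (K k) \<le> Sup (K k)" for k
      using cInf_le_cSup[OF K(2) bdd(2,1)] .
    show "{Inf (K k)..Sup (K k)} \<subseteq> J" for k
    proof
      fix y assume y: "y \<in> {Inf (K k)..Sup (K k)}"
      have "Inf (K k) \<in> J" "Sup (K k) \<in> J"
        using K_in K(3) by blast+
      from mem_is_interval_1_I[OF assms(2) this] y show "y \<in> J"
        by simp
    qed
    show "J \<subseteq> (\<Union>k. {Inf (K k)<..<Sup (K k)})"
    proof
      fix y assume "y \<in> J"
      then obtain n where "y \<in> interior (C (Suc n))"
        using C(3,4) by blast
      then have "y \<in> interior (K (Suc n))"
        using interior_mono[of "C (Suc n)" "K (Suc n)"] by (auto simp: K_def)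
      from Inf_less_interior_less_Sup[OF this bdd] show "y \<in> (\<Union>k. {Inf (K k)<..<Sup (K k)})"
        by auto
    qed
  qed
qed

lemma qselection_compatible_sequence:
  assumes "decseq c" "incseq d" "\<And>k. c k \<le> d k"
    and selection: "\<And>k. \<exists>F. qselection Q f {c k..d k} F"
  obtains G where "\<And>k. qselection Q f {c k..d k} (G k)"
    and "\<And>k m i y. k \<le> m \<Longrightarrow> i < Q \<Longrightarrow> y \<in> {c k..d k} \<Longrightarrow> G m i y = G k i y"
proof -
  have "\<exists>G. \<forall>k. qselection Q f {c k..d k} (G k) \<and>
      (\<forall>i<Q. \<forall>y\<in>{c k..d k}. G (Suc k) i y = G k i y)"
  proof (rule dependent_nat_choice)
    fix F k assume F: "qselection Q f {c k..d k} F"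
    obtain G where G: "qselection Q f {c (Suc k)..d (Suc k)} G"
      using selection by blast
    have "c (Suc k) \<le> c k" "d k \<le> d (Suc k)"
      using decseqD[OF assms(1)] incseqD[OF assms(2)] by simp_all
    then show "\<exists>F'. qselection Q f {c (Suc k)..d (Suc k)} F' \<and> (\<forall>i<Q. \<forall>y\<in>{c k..d k}. F' i y = F i y)"
      using qselection_extend[OF _ assms(3) _ F G] by blast
  qed (rule selection)
  then obtain G where G: "\<And>k. qselection Q f {c k..d k} (G k)"
    and G_step: "\<And>k i y. i < Q \<Longrightarrow> y \<in> {c k..d k} \<Longrightarrow> G (Suc k) i y = G k i y"
    by blast
  have "G m i y = G k i y" if "k \<le> m" "i < Q" "y \<in> {c k..d k}" for k m i y
    using that(1)
  proof (induction rule: dec_induct)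
    case (step m)
    have "y \<in> {c m..d m}"
      using decseqD[OF assms(1) step(1)] incseqD[OF assms(2) step(1)] that(3) by auto
    then show ?case
      using G_step[OF that(2)] step(3) by simp
  qed simp
  with G show ?thesis
    using that by blast
qed

lemma qselection_open_interval_from_compact:
  assumes "open J" "is_interval J"
    and compact_selection: "\<And>c d. {c..d} \<subseteq> J \<Longrightarrow> \<exists>F. qselection Q f {c..d} F"
  shows "\<exists>F. qselection Q f J F"
proof (cases "J = {}")
  case True
  then show ?thesis
    by (simp add: qselection_def)
next
  case False
  then obtain x0 where "x0 \<in> J"
    by blast
  then obtain c d where c: "decseq c" and d: "incseq d" and cd: "\<And>k. c k \<le> d k"
    and K_sub: "\<And>k. {c k..d k} \<subseteq> J" and J_sub: "J \<subseteq> (\<Union>k. {c k<..<d k})"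
    by (rule open_interval_exhaustion[OF assms(1,2)]) blast
  have "\<exists>F. qselection Q f {c k..d k} F" for k
    using compact_selection K_sub by blast
  then obtain G where G: "\<And>k. qselection Q f {c k..d k} (G k)"
    and G_mono: "\<And>k m i y. k \<le> m \<Longrightarrow> i < Q \<Longrightarrow> y \<in> {c k..d k} \<Longrightarrow> G m i y = G k i y"
    by (rule qselection_compatible_sequence[OF c d cd]) blast
  have "qselection Q f (\<Union>k\<in>UNIV. {c k<..<d k}) (\<lambda>i y. G (SOME k. k \<in> UNIV \<and> y \<in> {c k<..<d k}) i y)"
  proof (rule qselection_open_Union)
    show "qselection Q f {c k<..<d k} (G k)" for k
      using G by (rule qselection_subset) auto
    show "G k i y = G m i y" if "i < Q" "y \<in> {c k<..<d k}" "y \<in> {c m<..<d m}" for k m i y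
      using G_mono[of k "max k m" i y] G_mono[of m "max k m" i y] that by simp
  qed auto
  moreover have "{c k<..<d k} \<subseteq> J" for k
    using K_sub[of k] by auto
  then have "J = (\<Union>k. {c k<..<d k})"
    using J_sub by blast
  ultimately show ?thesis
    by auto
qed

lemma qselection_open_from_local:
  assumes "open U" and local: "\<And>y. y \<in> U \<Longrightarrow> \<exists>e>0. \<exists>F. qselection Q f {y-e..y+e} F"
  shows "\<exists>F. qselection Q f U F"
proof -
  let ?C = "connected_component_set U"
  define S where "S y = (SOME F. qselection Q f (?C y) F)" for y
  have "\<exists>F. qselection Q f (?C y) F" for y
  proof (rule qselection_open_interval_from_compact)
    show "open (?C y)"
      using open_connected_component[OF assms(1)] .
    show "is_interval (?C y)"
      using is_interval_connected_1 connected_connected_component by blast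
    fix c d assume "{c..d} \<subseteq> ?C y"
    then have "{c..d} \<subseteq> U"
      using connected_component_subset by blast
    then show "\<exists>F. qselection Q f {c..d} F"
      using local by (intro qselection_interval_from_local) blast
  qed
  then have S: "qselection Q f (?C y) (S y)" for y
    unfolding S_def by (rule someI_ex)
  have "qselection Q f (\<Union>y\<in>U. ?C y) (\<lambda>i z. S (SOME y. y \<in> U \<and> z \<in> ?C y) i z)"
  proof (rule qselection_open_Union)
    show "S y i z = S y' i z" if "z \<in> ?C y" "z \<in> ?C y'" for y y' i z
      using connected_component_eq[OF that(1)] connected_component_eq[OF that(2)]
      unfolding S_def by simp
  qed (use S open_connected_component[OF assms(1)] in auto)
  then show ?thesis
    using Union_connected_component[of U] by auto
qed

section \<open>Existence of continuous selections\<close>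

lemma qselection_interval_from_UNIV:
  fixes f :: "real \<Rightarrow> 'a::real_normed_vector multiset"
  assumes "c \<le> d" "\<forall>y\<in>{c..d}. size (f y) = Q" "qcontinuous_on {c..d} f"
    and selection: "\<And>g :: real \<Rightarrow> 'a multiset.
      \<forall>y. size (g y) = Q \<Longrightarrow> qcontinuous_on UNIV g \<Longrightarrow> \<exists>G. qselection Q g UNIV G"
  shows "\<exists>F. qselection Q f {c..d} F"
proof -
  define clamp where "clamp y = max c (min d y)" for y
  have clamp_in: "clamp y \<in> {c..d}" for y
    using assms(1) by (auto simp: clamp_def)
  have clamp_id: "y \<in> {c..d} \<Longrightarrow> clamp y = y" for y
    by (simp add: clamp_def)
  have clamp_dist: "\<bar>clamp y - clamp x\<bar> \<le> \<bar>y - x\<bar>" for x y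
    by (auto simp: clamp_def max_def min_def)
  have cont: "qcontinuous_on UNIV (f \<circ> clamp)"
    unfolding qcontinuous_on_def
  proof (intro ballI allI impI)
    fix x e assume "(e::real) > 0"
    then obtain \<delta> where "\<delta> > 0" and \<delta>: "\<forall>y\<in>{c..d}. \<bar>y - clamp x\<bar> < \<delta> \<longrightarrow> Gdist (f y) (f (clamp x)) < e"
      using assms(3) clamp_in unfolding qcontinuous_on_def by blast
    then show "\<exists>\<delta>>0. \<forall>y\<in>UNIV. \<bar>y - x\<bar> < \<delta> \<longrightarrow> Gdist ((f \<circ> clamp) y) ((f \<circ> clamp) x) < e"
      using clamp_in clamp_dist by (metis comp_apply le_less_trans)
  qed
  have "\<forall>y. size ((f \<circ> clamp) y) = Q"
    using assms(2) clamp_in by simp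
  then obtain G where "qselection Q (f \<circ> clamp) UNIV G"
    using selection cont by blast
  then have "qselection Q (f \<circ> clamp) {c..d} G"
    by (rule qselection_subset) simp
  then have "qselection Q f {c..d} G"
    using clamp_id unfolding qselection_def by simp
  then show ?thesis
    by blast
qed

lemma qselection_split_stable:
  fixes f :: "real \<Rightarrow> 'a::real_normed_vector multiset"
  assumes "\<forall>z\<in>S. size (f z) = Q" "qcontinuous_on S f" "\<epsilon> > 0"
    and stable: "\<And>z z' w w'. z \<in> S \<Longrightarrow> z' \<in> S \<Longrightarrow> w \<in># f z \<Longrightarrow> w' \<in># f z' \<Longrightarrow>
      norm (w - w') < \<epsilon> \<Longrightarrow> P w \<longleftrightarrow> P w'"
    and k: "\<forall>z\<in>S. size (filter_mset P (f z)) = k" "0 < k" "k < Q"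
    and smaller: "\<And>m (g :: real \<Rightarrow> 'a multiset). m < Q \<Longrightarrow> \<forall>z\<in>S. size (g z) = m \<Longrightarrow>
      qcontinuous_on S g \<Longrightarrow> \<exists>G. qselection m g S G"
  shows "\<exists>F. qselection Q f S F"
proof -
  define A where "A z = filter_mset P (f z)" for z
  define B where "B z = filter_mset (\<lambda>w. \<not> P w) (f z)" for z
  have f_eq: "f z = A z + B z" for z
    unfolding A_def B_def by (rule multiset_partition)
  have size_B: "\<forall>z\<in>S. size (B z) = Q - k"
    using assms(1) k(1) f_eq unfolding A_def by (metis add_diff_cancel_left' size_union)
  have "qcontinuous_on S A" "qcontinuous_on S B"
    unfolding A_def B_def using stable
    by (intro qcontinuous_on_filter_mset[OF assms(1-3)]; blast)+
  then obtain FA FB where FA: "qselection k A S FA" and FB: "qselection (Q - k) B S FB"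
    using smaller[of k A] smaller[of "Q - k" B] k size_B unfolding A_def by auto
  have "qselection (k + (Q - k)) (\<lambda>z. A z + B z) S (\<lambda>i. if i < k then FA i else FB (i - k))"
    by (rule qselection_add[OF FA FB])
  moreover have "(\<lambda>z. A z + B z) = f" "k + (Q - k) = Q"
    using f_eq k(3) by auto
  ultimately show ?thesis
    by auto
qed

lemma qselection_near_noncollapsed_point:
  fixes f :: "real \<Rightarrow> 'a::real_normed_vector multiset"
  assumes size: "\<forall>z. size (f z) = Q" and cont: "qcontinuous_on UNIV f"
    and "p \<in># f y" "q \<in># f y" "q \<noteq> p"
    and smaller: "\<And>m (g :: real \<Rightarrow> 'a multiset) c d. m < Q \<Longrightarrow> c \<le> d \<Longrightarrow>
      \<forall>z\<in>{c..d}. size (g z) = m \<Longrightarrow> qcontinuous_on {c..d} g \<Longrightarrow> \<exists>G. qselection m g {c..d} G"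
  shows "\<exists>e>0. \<exists>F. qselection Q f {y-e..y+e} F"
proof -
  obtain \<epsilon> where "\<epsilon> > 0" and separated: "\<And>u. u \<in># f y \<Longrightarrow> u \<noteq> p \<Longrightarrow> 4 * \<epsilon> \<le> norm (u - p)"
    using isolating_radius[where M = "f y" and p = p] by blast
  obtain r where "r > 0" and r: "\<forall>z\<in>UNIV. \<bar>z - y\<bar> < r \<longrightarrow> Gdist (f z) (f y) < \<epsilon>"
    using cont \<open>\<epsilon> > 0\<close> unfolding qcontinuous_on_def by blast
  define S where "S = {y - r/2..y + r/2}"
  have close: "Gdist (f z) (f y) < \<epsilon>" if "z \<in> S" for z
    using r that \<open>r > 0\<close> by (auto simp: S_def abs_le_iff)
  define P where "P w \<longleftrightarrow> norm (w - p) < 2 * \<epsilon>" for w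
  have cluster_size: "size (filter_mset P (f z)) = count (f y) p" if "z \<in> S" for z
    unfolding P_def using Gdist_cluster(1)[OF _ close[OF that] separated] size by simp
  have gap: "norm (w - p) < \<epsilon> \<or> 3 * \<epsilon> < norm (w - p)" if "z \<in> S" "w \<in># f z" for z w
    using Gdist_cluster(2)[OF _ close[OF that(1)] separated] size that(2) by simp
  have stable: "P w \<longleftrightarrow> P w'"
    if "z \<in> S" "z' \<in> S" "w \<in># f z" "w' \<in># f z'" "norm (w - w') < \<epsilon>" for z z' w w'
  proof -
    have "\<bar>norm (w - p) - norm (w' - p)\<bar> \<le> norm (w - w')"
      using norm_triangle_ineq3[of "w - p" "w' - p"] by simp
    then show ?thesis
      unfolding P_def using gap[OF that(1,3)] gap[OF that(2,4)] that(5) by linarith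
  qed
  have k_less: "count (f y) p < Q"
    using count_less_size[OF \<open>q \<in># f y\<close> \<open>q \<noteq> p\<close>] size by simp
  have k_pos: "0 < count (f y) p"
    using \<open>p \<in># f y\<close> by simp
  have "\<exists>F. qselection Q f S F"
  proof (rule qselection_split_stable[where P = P and k = "count (f y) p"])
    show "\<forall>z\<in>S. size (f z) = Q"
      using size by simp
    show "qcontinuous_on S f"
      using cont by (rule qcontinuous_on_subset) simp
    fix m and g :: "real \<Rightarrow> 'a multiset"
    assume "m < Q" "\<forall>z\<in>S. size (g z) = m" "qcontinuous_on S g"
    then show "\<exists>G. qselection m g S G"
      using \<open>r > 0\<close> unfolding S_def by (intro smaller) auto
  qed (use \<open>\<epsilon> > 0\<close> stable cluster_size k_pos k_less in blast)+
  then show ?thesis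
    using \<open>r > 0\<close> unfolding S_def by (intro exI[of _ "r/2"]) auto
qed

lemma open_noncollapsed_points:
  fixes f :: "real \<Rightarrow> 'a::real_normed_vector multiset"
  assumes size: "\<forall>z. size (f z) = Q" and cont: "qcontinuous_on UNIV f"
  shows "open {y. \<exists>p\<in>#f y. \<exists>q\<in>#f y. p \<noteq> q}"
  unfolding open_dist
proof (intro ballI)
  fix y assume "y \<in> {y. \<exists>p\<in>#f y. \<exists>q\<in>#f y. p \<noteq> q}"
  then obtain p q where pq: "p \<in># f y" "q \<in># f y" "p \<noteq> q"
    by blast
  then have "norm (p - q) / 2 > 0"
    by simp
  then obtain r where "r > 0" and r: "\<forall>z\<in>UNIV. \<bar>z - y\<bar> < r \<longrightarrow> Gdist (f z) (f y) < norm (p - q) / 2"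
    using cont unfolding qcontinuous_on_def by blast
  have "\<exists>p'\<in>#f z. \<exists>q'\<in>#f z. p' \<noteq> q'" if "dist z y < r" for z
  proof -
    have close: "Gdist (f z) (f y) < norm (p - q) / 2"
      using r that by (simp add: dist_real_def)
    have sizes: "size (f z) = size (f y)"
      using size by simp
    obtain p' where p': "p' \<in># f z" "norm (p' - p) \<le> Gdist (f z) (f y)"
      using Gdist_close_point'[OF sizes pq(1)] by blast
    obtain q' where q': "q' \<in># f z" "norm (q' - q) \<le> Gdist (f z) (f y)"
      using Gdist_close_point'[OF sizes pq(2)] by blast
    have "p' \<noteq> q'"
    proof
      assume "p' = q'"
      then have "norm (p - q) \<le> norm (p' - p) + norm (q' - q)"
        using norm_triangle_ineq4[of "p' - q" "p' - p"] by (simp add: norm_minus_commute)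
      then show False
        using p'(2) q'(2) close by linarith
    qed
    then show ?thesis
      using p'(1) q'(1) by blast
  qed
  then show "\<exists>e>0. \<forall>z. dist z y < e \<longrightarrow> z \<in> {y. \<exists>p\<in>#f y. \<exists>q\<in>#f y. p \<noteq> q}"
    using \<open>r > 0\<close> by blast
qed

lemma isCont_at_collapsed_point:
  fixes f :: "real \<Rightarrow> 'a::real_normed_vector multiset"
  assumes size: "\<forall>z. size (f z) = size (f y)" and cont: "qcontinuous_on UNIV f"
    and collapsed: "f y = replicate_mset Q p" and selection: "\<And>z. g z \<in># f z"
  shows "isCont g y"
  unfolding continuous_at_eps_delta
proof (intro allI impI)
  fix e :: real assume "e > 0"
  then obtain \<delta> where "\<delta> > 0" and \<delta>: "\<forall>z\<in>UNIV. \<bar>z - y\<bar> < \<delta> \<longrightarrow> Gdist (f z) (f y) < e"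
    using cont unfolding qcontinuous_on_def by blast
  have at_p: "u = p" if "u \<in># f y" for u
    using that unfolding collapsed by (simp split: if_splits)
  have "dist (g z) (g y) < e" if "dist z y < \<delta>" for z
  proof -
    obtain u where u: "u \<in># f y" "norm (g z - u) \<le> Gdist (f z) (f y)"
      using Gdist_close_point[OF size[rule_format] selection] by blast
    moreover have "Gdist (f z) (f y) < e"
      using \<delta> that by (simp add: dist_real_def)
    moreover have "u = g y"
      using at_p[OF u(1)] at_p[OF selection] by simp
    ultimately show ?thesis
      by (simp add: dist_norm)
  qed
  then show "\<exists>d>0. \<forall>z. dist z y < d \<longrightarrow> dist (g z) (g y) < e"
    using \<open>\<delta> > 0\<close> by blast
qed

lemma qselection_extend_to_collapsed_points:
  fixes f :: "real \<Rightarrow> 'a::real_normed_vector multiset"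
  assumes size: "\<forall>z. size (f z) = Q" and cont: "qcontinuous_on UNIV f"
    and "open U" and F: "qselection Q f U F"
    and collapsed: "\<And>y. y \<notin> U \<Longrightarrow> \<forall>p\<in>#f y. \<forall>q\<in>#f y. p = q"
  shows "qselection Q f UNIV (\<lambda>i y. if y \<in> U then F i y else (SOME p. p \<in># f y))"
    (is "qselection Q f UNIV ?G")
proof -
  have collapsed_value: "f y = replicate_mset Q (SOME p. p \<in># f y)" if "y \<notin> U" for y
    using constant_mset_eq_replicate_mset[OF collapsed[OF that]] by (subst (asm) size[rule_format])
  have G_values: "f y = qpt Q ?G y" for y
  proof (cases "y \<in> U")
    case True
    then have "f y = qpt Q F y"
      using F unfolding qselection_def by blast
    also have "\<dots> = qpt Q ?G y"
      by (rule qpt_cong) (simp add: True)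
    finally show ?thesis .
  next
    case False
    have "qpt Q ?G y = qpt Q (\<lambda>i _. SOME p. p \<in># f y) y"
      by (rule qpt_cong) (simp add: False)
    also have "\<dots> = replicate_mset Q (SOME p. p \<in># f y)"
      by (rule qpt_const)
    also have "\<dots> = f y"
      by (rule collapsed_value[OF False, symmetric])
    finally show ?thesis
      by (rule sym)
  qed
  have "isCont (?G i) y" if "i < Q" for i y
  proof (cases "y \<in> U")
    case True
    have "continuous_on U (F i)"
      using F \<open>i < Q\<close> unfolding qselection_def by blast
    then have "continuous_on U (?G i)"
      by (rule continuous_on_eq) simp
    then show ?thesis
      using True \<open>open U\<close> continuous_on_eq_continuous_at by blast
  next
    case False
    show ?thesis
    proof (rule isCont_at_collapsed_point[OF _ cont collapsed_value[OF False]])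
      show "\<forall>z. size (f z) = size (f y)"
        using size by simp
      show "?G i z \<in># f z" for z
        using G_values[of z] qpt_in[OF \<open>i < Q\<close>, of ?G z] by simp
    qed
  qed
  then show ?thesis
    unfolding qselection_def using G_values by (simp add: continuous_at_imp_continuous_on)
qed

lemma qselection_UNIV:
  fixes f :: "real \<Rightarrow> 'a::real_normed_vector multiset"
  assumes "\<forall>z. size (f z) = Q" "qcontinuous_on UNIV f"
  shows "\<exists>F. qselection Q f UNIV F"
  using assms
proof (induction Q arbitrary: f rule: less_induct)
  case (less Q f)
  define U where "U = {y. \<exists>p\<in>#f y. \<exists>q\<in>#f y. p \<noteq> q}"
  have "open U"
    unfolding U_def using open_noncollapsed_points[OF less.prems] .
  have "\<exists>e>0. \<exists>F. qselection Q f {y-e..y+e} F" if "y \<in> U" for y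
  proof -
    obtain p q where "p \<in># f y" "q \<in># f y" "q \<noteq> p"
      using \<open>y \<in> U\<close> unfolding U_def by blast
    then show ?thesis
    proof (rule qselection_near_noncollapsed_point[OF less.prems])
      fix m and g :: "real \<Rightarrow> 'a multiset" and c d :: real
      assume "m < Q" "c \<le> d" "\<forall>z\<in>{c..d}. size (g z) = m" "qcontinuous_on {c..d} g"
      then show "\<exists>G. qselection m g {c..d} G"
        using less.IH by (intro qselection_interval_from_UNIV) blast+
    qed
  qed
  then obtain F where "qselection Q f U F"
    using qselection_open_from_local[OF \<open>open U\<close>] by blast
  then show ?case
    using qselection_extend_to_collapsed_points[OF less.prems \<open>open U\<close>] unfolding U_def by blast
qed

lemma qselection_interval:
  fixes f :: "real \<Rightarrow> 'a::real_normed_vector multiset"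
  assumes "c \<le> d" "\<forall>y\<in>{c..d}. size (f y) = Q" "qcontinuous_on {c..d} f"
  shows "\<exists>F. qselection Q f {c..d} F"
  using assms qselection_UNIV by (rule qselection_interval_from_UNIV)

section \<open>Differentiability of the branches\<close>

lemma tendsto_zero_if_divide_dist_tendsto_zero:
  fixes G :: "real \<Rightarrow> real"
  assumes "((\<lambda>x. G x / \<bar>x - x0\<bar>) \<longlongrightarrow> 0) (at x0)"
  shows "(G \<longlongrightarrow> 0) (at x0)"
proof -
  have "((\<lambda>x. G x / \<bar>x - x0\<bar> * \<bar>x - x0\<bar>) \<longlongrightarrow> 0 * \<bar>x0 - x0\<bar>) (at x0)"
    by (intro tendsto_intros assms)
  moreover have "\<forall>\<^sub>F x in at x0. G x / \<bar>x - x0\<bar> * \<bar>x - x0\<bar> = G x"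
    by (simp add: eventually_at_filter)
  ultimately show ?thesis
    by (simp add: tendsto_cong)
qed

lemma eventually_near_branch_through_point:
  fixes g :: "real \<Rightarrow> 'a::real_normed_vector" and A :: "nat \<Rightarrow> real \<Rightarrow> 'a"
  assumes "isCont g x0" "(G \<longlongrightarrow> 0) (at x0)" "\<And>j. j < Q \<Longrightarrow> isCont (A j) x0"
    and near: "\<forall>\<^sub>F x in at x0. \<exists>j<Q. norm (g x - A j x) \<le> G x"
  shows "\<forall>\<^sub>F x in at x0. \<exists>j<Q. A j x0 = g x0 \<and> norm (g x - A j x) \<le> G x"
proof -
  have far: "\<forall>\<^sub>F x in at x0. G x < norm (g x - A j x)" if "j < Q" "A j x0 \<noteq> g x0" for j
  proof -
    have "((\<lambda>x. norm (g x - A j x) - G x) \<longlongrightarrow> norm (g x0 - A j x0) - 0) (at x0)"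
      using assms(1,2) assms(3)[OF that(1)] by (intro tendsto_intros) (auto simp: isCont_def)
    moreover have "norm (g x0 - A j x0) - 0 > 0"
      using that(2) by simp
    ultimately have "\<forall>\<^sub>F x in at x0. norm (g x - A j x) - G x > 0"
      by (rule order_tendstoD(1))
    then show ?thesis
      by eventually_elim simp
  qed
  have "\<forall>\<^sub>F x in at x0. \<forall>j\<in>{j. j < Q \<and> A j x0 \<noteq> g x0}. G x < norm (g x - A j x)"
    using far by (intro eventually_ball_finite) auto
  with near show ?thesis
    by eventually_elim (metis (mono_tags, lifting) mem_Collect_eq not_le)
qed

lemma has_derivative_if_near_affine:
  fixes g :: "real \<Rightarrow> 'a::real_normed_vector"
  assumes near: "\<forall>\<^sub>F x in at x0. norm (g x - (c + x *\<^sub>R v)) \<le> G x"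
    and small: "((\<lambda>x. G x / \<bar>x - x0\<bar>) \<longlongrightarrow> 0) (at x0)"
    and "g x0 = c + x0 *\<^sub>R v"
  shows "(g has_derivative (\<lambda>h. h *\<^sub>R v)) (at x0)"
  unfolding has_derivative_iff_norm
proof
  show "bounded_linear (\<lambda>h. h *\<^sub>R v)"
    by (rule bounded_linear_scaleR_left)
  have increment: "g x - g x0 - (x - x0) *\<^sub>R v = g x - (c + x *\<^sub>R v)" for x
    using assms(3) by (simp add: algebra_simps)
  have "\<forall>\<^sub>F x in at x0. norm (norm (g x - g x0 - (x - x0) *\<^sub>R v) / norm (x - x0)) \<le> G x / \<bar>x - x0\<bar>"
    using near by eventually_elim (simp add: increment divide_right_mono)
  then show "((\<lambda>x. norm (g x - g x0 - (x - x0) *\<^sub>R v) / norm (x - x0)) \<longlongrightarrow> 0) (at x0)"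
    using small by (rule Lim_null_comparison)
qed

lemma differentiable_if_near_strongly_separated_branches:
  fixes g :: "real \<Rightarrow> 'a::real_normed_vector" and c v :: "nat \<Rightarrow> 'a"
  assumes "isCont g x0" and small: "((\<lambda>x. G x / \<bar>x - x0\<bar>) \<longlongrightarrow> 0) (at x0)"
    and near: "\<forall>\<^sub>F x in at x0. \<exists>j<Q. norm (g x - (c j + x *\<^sub>R v j)) \<le> G x"
    and strong: "\<forall>i<Q. \<forall>j<Q. c i + x0 *\<^sub>R v i = c j + x0 *\<^sub>R v j \<longrightarrow> c i = c j \<and> v i = v j"
  shows "g differentiable (at x0)"
proof -
  have through: "\<forall>\<^sub>F x in at x0. \<exists>j<Q. c j + x0 *\<^sub>R v j = g x0 \<and> norm (g x - (c j + x *\<^sub>R v j)) \<le> G x"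
  proof (rule eventually_near_branch_through_point[where A = "\<lambda>j x. c j + x *\<^sub>R v j"])
    show "(G \<longlongrightarrow> 0) (at x0)"
      by (rule tendsto_zero_if_divide_dist_tendsto_zero[OF small])
    show "isCont (\<lambda>x. c j + x *\<^sub>R v j) x0" for j
      by (intro continuous_intros)
  qed (use assms(1) near in auto)
  then obtain j0 where "j0 < Q" and j0: "c j0 + x0 *\<^sub>R v j0 = g x0"
    using eventually_happens'[OF trivial_limit_at] by blast
  have "\<forall>\<^sub>F x in at x0. norm (g x - (c j0 + x *\<^sub>R v j0)) \<le> G x"
    using through
  proof eventually_elim
    case (elim x)
    then obtain j where "j < Q" "c j + x0 *\<^sub>R v j = g x0" "norm (g x - (c j + x *\<^sub>R v j)) \<le> G x"
      by blast
    moreover have "c j = c j0 \<and> v j = v j0"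
      using strong \<open>j < Q\<close> \<open>j0 < Q\<close> j0 calculation(2) by metis
    ultimately show ?case
      by simp
  qed
  then have "(g has_derivative (\<lambda>h. h *\<^sub>R v j0)) (at x0)"
    using small j0[symmetric] by (rule has_derivative_if_near_affine)
  then show ?thesis
    by (rule differentiableI)
qed

lemma qselection_branch_differentiable:
  fixes f :: "real \<Rightarrow> 'a::real_normed_vector multiset" and c v :: "nat \<Rightarrow> 'a"
  assumes F: "qselection Q f S F" and "x0 \<in> interior S" "\<forall>x\<in>S. size (f x) = Q"
    and approx: "((\<lambda>x. Gdist (f x) (qpt Q (\<lambda>i x. c i + x *\<^sub>R v i) x) / \<bar>x - x0\<bar>) \<longlongrightarrow> 0) (at x0)"
    and strong: "\<forall>i<Q. \<forall>j<Q. c i + x0 *\<^sub>R v i = c j + x0 *\<^sub>R v j \<longrightarrow> c i = c j \<and> v i = v j"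
    and "i < Q"
  shows "F i differentiable (at x0)"
proof (rule differentiable_if_near_strongly_separated_branches[OF _ approx _ strong])
  have "continuous_on S (F i)"
    using F \<open>i < Q\<close> unfolding qselection_def by blast
  then show "isCont (F i) x0"
    using assms(2) by (rule continuous_on_interior)
  have "\<forall>\<^sub>F x in at x0. x \<in> interior S"
    using assms(2) by (rule eventually_at_in_open'[rotated]) simp
  then show "\<forall>\<^sub>F x in at x0. \<exists>j<Q. norm (F i x - (c j + x *\<^sub>R v j))
      \<le> Gdist (f x) (qpt Q (\<lambda>i x. c i + x *\<^sub>R v i) x)"
  proof eventually_elim
    case (elim x)
    then have "x \<in> S"
      using interior_subset by blast
    then have "size (f x) = Q" "F i x \<in># f x"
      using F assms(3) qpt_in[OF \<open>i < Q\<close>, of F x] unfolding qselection_def by simp_all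
    then show ?case
      using qpt_close_branch[where g = "\<lambda>i x. c i + x *\<^sub>R v i"] by simp
  qed
qed

theorem theorem5p2:
  fixes f :: "real \<Rightarrow> (real ^ 'n) multiset" and Q :: nat and a b x0 :: real
  assumes "\<forall>x\<in>{a..b}. size (f x) = Q"
    and "qcontinuous_on {a..b} f"
    and "x0 \<in> {a<..<b}"
    and "strongly_affinely_approximatable Q {a..b} f x0"
  shows "\<exists>fs :: nat \<Rightarrow> real \<Rightarrow> real ^ 'n.
           (\<forall>i<Q. continuous_on {a..b} (fs i)) \<and>
           (\<forall>x\<in>{a..b}. f x = qpt Q fs x) \<and>
           (\<forall>i<Q. fs i differentiable (at x0))"
proof -
  have "a \<le> b"
    using assms(3) by simp
  then obtain F where F: "qselection Q f {a..b} F"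
    using qselection_interval[OF _ assms(1,2)] by blast
  have interior: "x0 \<in> interior {a..b}"
    using assms(3) by simp
  then obtain c v :: "nat \<Rightarrow> real ^ 'n"
    where "((\<lambda>x. Gdist (f x) (qpt Q (\<lambda>i x. c i + x *\<^sub>R v i) x) / \<bar>x - x0\<bar>) \<longlongrightarrow> 0) (at x0)"
      and "\<forall>i<Q. \<forall>j<Q. c i + x0 *\<^sub>R v i = c j + x0 *\<^sub>R v j \<longrightarrow> c i = c j \<and> v i = v j"
    using assms(4) at_within_interior[OF interior]
    unfolding strongly_affinely_approximatable_def by auto
  then have "\<forall>i<Q. F i differentiable (at x0)"
    using qselection_branch_differentiable[OF F interior assms(1)] by blast
  then show ?thesis
    using F unfolding qselection_def by blast
qed

end
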